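(* Let $R>0$ and, for $d\ge0$, $r\ge0$, $$f(d,r)=\begin{cases}2r/R^2,&r\le R-d,\\0,&r>R+d\text{ or }r<d-R,\\\frac{2r}{\pi R^2}\arccos\Big(\frac{d^2+r^2-R^2}{2dr}\Big),&\text{otherwise.}\end{cases}$$ Then for any $d\ge0$ the function $f(d,\cdot)$ is concave on its support intersected with $[R,\infty)$. If in addition $d\ge R$, then $f(d,\cdot)$ is concave on its full support $[d-R,d+R]$.
   Context: $f(d,r)$ is the derivative in $r$ of $|B_r(0)\cap B_R(\mathbf{y})|/(\pi R^2)$ for $|\mathbf{y}|=d$ (the one-particle profile). *)

theory Defs
  imports "HOL-Analysis.Analysis"
begin

definition prof :: "real \<Rightarrow> real \<Rightarrow> real \<Rightarrow> real" where
  "prof R d r =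
     (if r \<le> R - d then 2 * r / R\<^sup>2
      else if r > R + d \<or> r < d - R then 0
      else 2 * r / (pi * R\<^sup>2) * arccos ((d\<^sup>2 + r\<^sup>2 - R\<^sup>2) / (2 * d * r)))"

definition prof_support :: "real \<Rightarrow> real \<Rightarrow> real set" where
  "prof_support R d = closure {r. 0 \<le> r \<and> prof R d r \<noteq> 0}"

end

(*
  Away from the region where it is linear, f(d,r) = 2/(pi R^2) g(r) with g(r) = r arccos c(r),
  c(r) being the cosine of the angle opposite R in the triangle with sides d, r, R. A direct
  computation gives g''(r) = (N^3 - 8 r^4 R^2) / (r D sqrt D) with N = r^2 - d^2 + R^2 and
  D = 4 r^2 R^2 - N^2 > 0 (sixteen times the squared area of the triangle). As N^2 < 4 r^2 R^2,
  g'' <= 0 as soon as N <= 2 r^2, i.e. r^2 >= R^2 - d^2: this holds for r >= R and, when d >= R,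
  on the whole support [d - R, d + R]. At the inner edge r = R - d the two formulas agree
  because c = -1 there, and concavity extends from the open interval to its closure by continuity.
*)
theory Submission
  imports Defs
begin

lemma concave_on_Icc_degenerate:
  fixes f :: "real \<Rightarrow> real"
  assumes "\<not> a < b"
  shows "concave_on {a..b} f"
proof (rule concave_on_linorderI)
  fix t x y assume "x \<in> {a..b}" "y \<in> {a..b}" "x < y"
  with assms show "(1 - t) * f x + t * f y \<le> f ((1 - t) *\<^sub>R x + t *\<^sub>R y)" by simp
qed simp

text \<open>Pull both points towards the midpoint, apply concavity inside, and let the pull vanish.\<close>
lemma concave_on_Icc_if_concave_on_Ioo:
  fixes f :: "real \<Rightarrow> real"
  assumes concave: "concave_on {a<..<b} f" and cont: "continuous_on {a..b} f"
  shows "concave_on {a..b} f"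
proof (cases "a < b")
  case False
  then show ?thesis by (rule concave_on_Icc_degenerate)
next
  case True
  define c where "c = (a + b) / 2"
  define pull where "pull z s = (1 - s) * z + s * c" for z s :: real
  have pull_inside: "pull z s \<in> {a<..<b}" if "z \<in> {a..b}" "s \<in> {0<..<1}" for z s
  proof -
    have "(1 - s) * a \<le> (1 - s) * z" "(1 - s) * z \<le> (1 - s) * b"
      using that by (auto intro: mult_left_mono)
    moreover have "s * a < s * c" "s * c < s * b"
      using that True by (auto simp: c_def)
    ultimately show ?thesis
      by (auto simp: pull_def algebra_simps)
  qed
  have eventually_inside: "\<forall>\<^sub>F s in at_right 0. pull z s \<in> {a<..<b}" if "z \<in> {a..b}" for z
  proof -
    have "\<forall>\<^sub>F s in at_right 0. s \<in> {0<..<(1::real)}"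
      by (rule eventually_at_right_real) simp
    then show ?thesis by eventually_elim (use that pull_inside in auto)
  qed
  have lim: "((\<lambda>s. f (pull z s)) \<longlongrightarrow> f z) (at_right 0)" if "z \<in> {a..b}" for z
  proof (rule continuous_on_tendsto_compose[OF cont _ that])
    have "((\<lambda>s. pull z s) \<longlongrightarrow> (1 - 0) * z + 0 * c) (at_right 0)"
      unfolding pull_def by (intro tendsto_intros)
    then show "((\<lambda>s. pull z s) \<longlongrightarrow> z) (at_right 0)" by simp
    show "\<forall>\<^sub>F s in at_right 0. pull z s \<in> {a..b}"
      using eventually_inside[OF that] by eventually_elim auto
  qed
  show ?thesis
    unfolding concave_on_iff
  proof (intro conjI ballI allI impI)
    fix x y u v :: real
    assume xy: "x \<in> {a..b}" "y \<in> {a..b}" and uv: "0 \<le> u" "0 \<le> v" "u + v = 1"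
    have "u *\<^sub>R x + v *\<^sub>R y \<in> {a..b}"
      using convexD[OF convex_real_interval(5) xy uv] .
    have pull_comb: "u * pull x s + v * pull y s = pull (u * x + v * y) s" for s
    proof -
      have "u * pull x s + v * pull y s = (1 - s) * (u * x + v * y) + (u + v) * s * c"
        by (simp add: pull_def algebra_simps)
      then show ?thesis using uv by (simp add: pull_def)
    qed
    have "\<forall>\<^sub>F s in at_right 0. u * f (pull x s) + v * f (pull y s) \<le> f (pull (u * x + v * y) s)"
      using eventually_inside[OF xy(1)] eventually_inside[OF xy(2)]
    proof eventually_elim
      case (elim s)
      then show ?case
        using concave_onD[OF concave, of v "pull x s" "pull y s"] uv pull_comb[of s]
        by (simp add: eq_diff_eq[of u 1 v, symmetric])
    qed
    moreover have "((\<lambda>s. u * f (pull x s) + v * f (pull y s)) \<longlongrightarrow> u * f x + v * f y) (at_right 0)"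
      using lim[OF xy(1)] lim[OF xy(2)] by (intro tendsto_intros)
    ultimately show "u * f x + v * f y \<le> f (u *\<^sub>R x + v *\<^sub>R y)"
      using lim[OF \<open>u *\<^sub>R x + v *\<^sub>R y \<in> {a..b}\<close>]
      by (auto intro: tendsto_le[OF trivial_limit_at_right_real])
  qed simp
qed

text \<open>In the triangle with sides \<open>d\<close>, \<open>r\<close>, \<open>R\<close>: the cosine of the angle opposite \<open>R\<close>
  (law of cosines), and sixteen times the squared area (Heron).\<close>
definition cos_angle :: "real \<Rightarrow> real \<Rightarrow> real \<Rightarrow> real" where
  "cos_angle R d r = (d\<^sup>2 + r\<^sup>2 - R\<^sup>2) / (2 * d * r)"

definition heron :: "real \<Rightarrow> real \<Rightarrow> real \<Rightarrow> real" where
  "heron R d r = 4 * r\<^sup>2 * R\<^sup>2 - (r\<^sup>2 - d\<^sup>2 + R\<^sup>2)\<^sup>2"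

lemma heron_eq: "heron R d r = (R - r + d) * (R + r - d) * (r + d - R) * (r + d + R)"
  unfolding heron_def by (simp add: power2_eq_square algebra_simps)

lemma lens_pos:
  fixes R d r :: real
  assumes "\<bar>d - R\<bar> < r" "r < d + R"
  shows "0 < R" "0 < d" "0 < r"
  using assms by linarith+

lemma heron_pos:
  fixes R d r :: real
  assumes "\<bar>d - R\<bar> < r" "r < d + R"
  shows "0 < heron R d r"
  unfolding heron_eq using assms lens_pos[OF assms] by (intro mult_pos_pos) auto

lemma one_minus_cos_angle:
  assumes "d \<noteq> 0" "r \<noteq> 0"
  shows "1 - cos_angle R d r = (R - r + d) * (R + r - d) / (2 * d * r)"
  using assms unfolding cos_angle_def by (simp add: field_simps power2_eq_square)

lemma one_plus_cos_angle:
  assumes "d \<noteq> 0" "r \<noteq> 0"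
  shows "1 + cos_angle R d r = (r + d - R) * (r + d + R) / (2 * d * r)"
  using assms unfolding cos_angle_def by (simp add: field_simps power2_eq_square)

lemma one_minus_cos_angle_sq:
  assumes "d \<noteq> 0" "r \<noteq> 0"
  shows "1 - (cos_angle R d r)\<^sup>2 = heron R d r / (2 * d * r)\<^sup>2"
  using assms unfolding cos_angle_def heron_def by (simp add: field_simps power2_eq_square)

lemma cos_angle_bounded:
  fixes R d r :: real
  assumes "0 < d" "0 < r" "\<bar>d - R\<bar> \<le> r" "r \<le> d + R"
  shows "-1 \<le> cos_angle R d r" "cos_angle R d r \<le> 1"
proof -
  have nz: "d \<noteq> 0" "r \<noteq> 0" using assms by auto
  have "0 \<le> 1 + cos_angle R d r"
    unfolding one_plus_cos_angle[OF nz] using assms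
    by (intro divide_nonneg_pos mult_nonneg_nonneg) auto
  then show "-1 \<le> cos_angle R d r" by linarith
  have "0 \<le> 1 - cos_angle R d r"
    unfolding one_minus_cos_angle[OF nz] using assms
    by (intro divide_nonneg_pos mult_nonneg_nonneg) auto
  then show "cos_angle R d r \<le> 1" by linarith
qed

lemma cos_angle_strict_bounds:
  fixes R d r :: real
  assumes "\<bar>d - R\<bar> < r" "r < d + R"
  shows "-1 < cos_angle R d r" "cos_angle R d r < 1"
proof -
  note pos = lens_pos[OF assms]
  have nz: "d \<noteq> 0" "r \<noteq> 0" using pos by auto
  have "0 < 1 + cos_angle R d r"
    unfolding one_plus_cos_angle[OF nz] using assms pos
    by (intro divide_pos_pos mult_pos_pos) auto
  then show "-1 < cos_angle R d r" by linarith
  have "0 < 1 - cos_angle R d r"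
    unfolding one_minus_cos_angle[OF nz] using assms pos
    by (intro divide_pos_pos mult_pos_pos) auto
  then show "cos_angle R d r < 1" by linarith
qed

lemma has_real_derivative_cos_angle:
  fixes R d r :: real
  assumes "d \<noteq> 0" "r \<noteq> 0"
  shows "(cos_angle R d has_real_derivative (r\<^sup>2 - d\<^sup>2 + R\<^sup>2) / (2 * d * r\<^sup>2)) (at r)"
proof -
  have "cos_angle R d = (\<lambda>x. (d\<^sup>2 + x\<^sup>2 - R\<^sup>2) / (2 * d * x))"
    by (rule ext) (simp add: cos_angle_def)
  then show ?thesis
    by simp (rule derivative_eq_intros refl | use assms in \<open>simp add: field_simps power2_eq_square\<close>)+
qed

lemma has_real_derivative_arccos_cos_angle:
  fixes R d r :: real
  assumes lens: "\<bar>d - R\<bar> < r" "r < d + R"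
  shows "((\<lambda>x. arccos (cos_angle R d x)) has_real_derivative
           - (r\<^sup>2 - d\<^sup>2 + R\<^sup>2) / (r * sqrt (heron R d r))) (at r)"
proof -
  note pos = lens_pos[OF lens] and bounds = cos_angle_strict_bounds[OF lens]
  have sqrt_eq: "sqrt (1 - (cos_angle R d r)\<^sup>2) = sqrt (heron R d r) / (2 * d * r)"
    using pos by (simp add: one_minus_cos_angle_sq real_sqrt_divide)
  have "((\<lambda>x. arccos (cos_angle R d x)) has_real_derivative
      inverse (- sqrt (1 - (cos_angle R d r)\<^sup>2)) * ((r\<^sup>2 - d\<^sup>2 + R\<^sup>2) / (2 * d * r\<^sup>2))) (at r)"
    using pos bounds by (intro DERIV_chain2[OF DERIV_arccos has_real_derivative_cos_angle]) auto
  also have "inverse (- sqrt (1 - (cos_angle R d r)\<^sup>2)) * ((r\<^sup>2 - d\<^sup>2 + R\<^sup>2) / (2 * d * r\<^sup>2))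
      = - (r\<^sup>2 - d\<^sup>2 + R\<^sup>2) / (r * sqrt (heron R d r))"
    unfolding sqrt_eq using pos heron_pos[OF lens] by (simp add: field_simps power2_eq_square)
  finally show ?thesis .
qed

lemma has_real_derivative_arc_profile:
  fixes R d r :: real
  assumes lens: "\<bar>d - R\<bar> < r" "r < d + R"
  shows "((\<lambda>x. x * arccos (cos_angle R d x)) has_real_derivative
           arccos (cos_angle R d r) - (r\<^sup>2 - d\<^sup>2 + R\<^sup>2) / sqrt (heron R d r)) (at r)"
proof -
  have "((\<lambda>x. x * arccos (cos_angle R d x)) has_real_derivative
      1 * arccos (cos_angle R d r) + (- (r\<^sup>2 - d\<^sup>2 + R\<^sup>2) / (r * sqrt (heron R d r))) * r) (at r)"
    by (rule DERIV_mult[OF DERIV_ident has_real_derivative_arccos_cos_angle[OF lens]])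
  also have "1 * arccos (cos_angle R d r) + (- (r\<^sup>2 - d\<^sup>2 + R\<^sup>2) / (r * sqrt (heron R d r))) * r
      = arccos (cos_angle R d r) - (r\<^sup>2 - d\<^sup>2 + R\<^sup>2) / sqrt (heron R d r)"
    using lens_pos[OF lens] heron_pos[OF lens] by (simp add: field_simps)
  finally show ?thesis .
qed

lemma has_real_derivative_arc_profile_deriv:
  fixes R d r :: real
  assumes lens: "\<bar>d - R\<bar> < r" "r < d + R"
  shows "((\<lambda>x. arccos (cos_angle R d x) - (x\<^sup>2 - d\<^sup>2 + R\<^sup>2) / sqrt (heron R d x))
           has_real_derivative
           - (8 * r ^ 4 * R\<^sup>2 - (r\<^sup>2 - d\<^sup>2 + R\<^sup>2) ^ 3) / (r * heron R d r * sqrt (heron R d r))) (at r)"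
proof -
  define N where "N = r\<^sup>2 - d\<^sup>2 + R\<^sup>2"
  define q where "q = sqrt (heron R d r)"
  have r: "0 < r" using lens_pos[OF lens] by simp
  have H: "0 < heron R d r" by (rule heron_pos[OF lens])
  then have q: "0 < q" "q\<^sup>2 = 4 * r\<^sup>2 * R\<^sup>2 - N\<^sup>2" "heron R d r = q\<^sup>2"
    by (auto simp: q_def N_def heron_def)
  have "heron R d = (\<lambda>x. 4 * x\<^sup>2 * R\<^sup>2 - (x\<^sup>2 - d\<^sup>2 + R\<^sup>2)\<^sup>2)"
    by (rule ext) (simp add: heron_def)
  then have "((\<lambda>x. (x\<^sup>2 - d\<^sup>2 + R\<^sup>2) / sqrt (heron R d x)) has_real_derivative
      (2 * r * q - N * ((8 * r * R\<^sup>2 - 4 * r * N) / (2 * q))) / q\<^sup>2) (at r)"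
    using H unfolding q_def N_def
    by simp (rule derivative_eq_intros refl | simp add: heron_def field_simps)+
  from DERIV_diff[OF has_real_derivative_arccos_cos_angle[OF lens] this]
  have "((\<lambda>x. arccos (cos_angle R d x) - (x\<^sup>2 - d\<^sup>2 + R\<^sup>2) / sqrt (heron R d x))
      has_real_derivative - N / (r * q) - (2 * r * q - N * ((8 * r * R\<^sup>2 - 4 * r * N) / (2 * q))) / q\<^sup>2)
      (at r)"
    unfolding N_def q_def .
  also have "- N / (r * q) - (2 * r * q - N * ((8 * r * R\<^sup>2 - 4 * r * N) / (2 * q))) / q\<^sup>2
      = (- N * q\<^sup>2 - 2 * r\<^sup>2 * q\<^sup>2 + r * N * (4 * r * R\<^sup>2 - 2 * r * N)) / (r * q\<^sup>2 * q)"
    using q r by (simp add: field_simps power2_eq_square)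
  also have "- N * q\<^sup>2 - 2 * r\<^sup>2 * q\<^sup>2 + r * N * (4 * r * R\<^sup>2 - 2 * r * N) = - (8 * r ^ 4 * R\<^sup>2 - N ^ 3)"
    unfolding q(2) by (simp add: power2_eq_square power3_eq_cube power4_eq_xxxx algebra_simps)
  also have "r * q\<^sup>2 * q = r * heron R d r * q"
    using q(3) by simp
  finally show ?thesis
    unfolding N_def q_def .
qed

lemma cube_le_if_square_le:
  fixes N r R :: real
  assumes "N\<^sup>2 \<le> 4 * r\<^sup>2 * R\<^sup>2" "N \<le> 2 * r\<^sup>2"
  shows "N ^ 3 \<le> 8 * r ^ 4 * R\<^sup>2"
proof (cases "N \<le> 0")
  case True
  then have "N ^ 3 \<le> 0"
    by (simp add: power_le_zero_eq)
  moreover have "0 \<le> 8 * r ^ 4 * R\<^sup>2" by simp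
  ultimately show ?thesis by linarith
next
  case False
  have "N ^ 3 = N\<^sup>2 * N" by (simp add: power2_eq_square power3_eq_cube)
  also have "\<dots> \<le> (4 * r\<^sup>2 * R\<^sup>2) * (2 * r\<^sup>2)"
    using assms False by (intro mult_mono) auto
  also have "\<dots> = 8 * r ^ 4 * R\<^sup>2" by (simp add: power2_eq_square power4_eq_xxxx)
  finally show ?thesis .
qed

lemma continuous_on_arc_profile:
  fixes R d lo :: real
  assumes "\<bar>d - R\<bar> \<le> lo" "lo < d + R"
  shows "continuous_on {lo..d + R} (\<lambda>r. r * arccos (cos_angle R d r))"
proof (cases "lo = 0")
  case True
  then have "d = R" "0 < R" using assms by auto
  txt \<open>Also at \<open>r = 0\<close>, where division by zero makes \<open>cos_angle R R 0 = 0\<close>.\<close>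
  then have "cos_angle R d = (\<lambda>r. r / (2 * R))"
    by (auto simp: cos_angle_def power2_eq_square field_simps)
  then show ?thesis
    using \<open>0 < R\<close> \<open>d = R\<close> True by (auto intro!: continuous_intros simp: field_simps)
next
  case False
  have "0 < d" using assms by linarith
  have pos: "0 < r" if "r \<in> {lo..d + R}" for r
    using assms False that by auto
  have "cos_angle R d = (\<lambda>x. (d\<^sup>2 + x\<^sup>2 - R\<^sup>2) / (2 * d * x))"
    by (rule ext) (simp add: cos_angle_def)
  moreover have "2 * d * r \<noteq> 0" if "r \<in> {lo..d + R}" for r
    using \<open>0 < d\<close> pos[OF that] by simp
  ultimately have "continuous_on {lo..d + R} (cos_angle R d)"
    by (auto intro!: continuous_intros)
  moreover have "-1 \<le> cos_angle R d r \<and> cos_angle R d r \<le> 1" if "r \<in> {lo..d + R}" for r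
    using cos_angle_bounded[OF \<open>0 < d\<close> pos[OF that]] assms that by auto
  ultimately show ?thesis
    by (intro continuous_on_mult continuous_on_arccos continuous_on_id) auto
qed

lemma concave_on_arc_profile:
  fixes R d lo :: real
  assumes lo: "\<bar>d - R\<bar> \<le> lo" "R\<^sup>2 - d\<^sup>2 \<le> lo\<^sup>2" "lo < d + R"
  shows "concave_on {lo..d + R} (\<lambda>r. r * arccos (cos_angle R d r))"
proof (rule concave_on_Icc_if_concave_on_Ioo)
  show "continuous_on {lo..d + R} (\<lambda>r. r * arccos (cos_angle R d r))"
    using lo by (intro continuous_on_arc_profile)
  show "concave_on {lo<..<d + R} (\<lambda>r. r * arccos (cos_angle R d r))"
  proof (rule f''_le0_imp_concave)
    fix r assume "r \<in> {lo<..<d + R}"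
    then have lens: "\<bar>d - R\<bar> < r" "r < d + R" and "lo < r" using lo by auto
    show "((\<lambda>x. x * arccos (cos_angle R d x)) has_real_derivative
        arccos (cos_angle R d r) - (r\<^sup>2 - d\<^sup>2 + R\<^sup>2) / sqrt (heron R d r)) (at r)"
      by (rule has_real_derivative_arc_profile[OF lens])
    show "((\<lambda>x. arccos (cos_angle R d x) - (x\<^sup>2 - d\<^sup>2 + R\<^sup>2) / sqrt (heron R d x))
        has_real_derivative
        - (8 * r ^ 4 * R\<^sup>2 - (r\<^sup>2 - d\<^sup>2 + R\<^sup>2) ^ 3) / (r * heron R d r * sqrt (heron R d r))) (at r)"
      by (rule has_real_derivative_arc_profile_deriv[OF lens])
    have H: "0 < heron R d r" by (rule heron_pos[OF lens])
    have "lo\<^sup>2 \<le> r\<^sup>2" using lo \<open>lo < r\<close> by (intro power_mono) auto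
    then have "(r\<^sup>2 - d\<^sup>2 + R\<^sup>2) ^ 3 \<le> 8 * r ^ 4 * R\<^sup>2"
      using lo H by (intro cube_le_if_square_le) (auto simp: heron_def)
    then show "- (8 * r ^ 4 * R\<^sup>2 - (r\<^sup>2 - d\<^sup>2 + R\<^sup>2) ^ 3) / (r * heron R d r * sqrt (heron R d r)) \<le> 0"
      using H lens_pos[OF lens] by (intro divide_nonpos_nonneg) auto
  qed simp
qed

lemma concave_on_cong:
  assumes "concave_on S f" "\<And>x. x \<in> S \<Longrightarrow> f x = g x"
  shows "concave_on S g"
  unfolding concave_on_iff
proof (intro conjI ballI allI impI)
  show "convex S" using assms(1) by (rule concave_on_imp_convex)
  fix x y :: 'a and u v :: real
  assume xy: "x \<in> S" "y \<in> S" and uv: "0 \<le> u" "0 \<le> v" "u + v = 1"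
  have "u *\<^sub>R x + v *\<^sub>R y \<in> S" using convexD[OF \<open>convex S\<close> xy uv] .
  then show "u * g x + v * g y \<le> g (u *\<^sub>R x + v *\<^sub>R y)"
    using assms xy uv unfolding concave_on_iff by metis
qed

lemma prof_eq_arc_profile:
  fixes R d r :: real
  assumes "0 < d" "\<bar>d - R\<bar> \<le> r" "r \<le> d + R"
  shows "prof R d r = 2 / (pi * R\<^sup>2) * (r * arccos (cos_angle R d r))"
proof (cases "r \<le> R - d")
  case True
  then have r: "r = R - d" using assms by linarith
  show ?thesis
  proof (cases "r = 0")
    case False
    have "d\<^sup>2 + r\<^sup>2 - R\<^sup>2 = - (2 * d * r)"
      unfolding r by (simp add: power2_eq_square algebra_simps)
    then have "cos_angle R d r = -1"
      using False assms unfolding cos_angle_def by simp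
    then show ?thesis
      using True False r assms by (simp add: prof_def)
  qed (simp add: prof_def)
next
  case False
  then show ?thesis
    using assms by (simp add: prof_def cos_angle_def)
qed

lemma concave_on_prof:
  fixes R d lo :: real
  assumes lo: "\<bar>d - R\<bar> \<le> lo" "R\<^sup>2 - d\<^sup>2 \<le> lo\<^sup>2" "lo < d + R"
  shows "concave_on {lo..d + R} (prof R d)"
proof (rule concave_on_cong)
  show "concave_on {lo..d + R} (\<lambda>r. 2 / (pi * R\<^sup>2) * (r * arccos (cos_angle R d r)))"
    using concave_on_arc_profile[OF lo] by (intro concave_on_cmul) auto
  have "0 < d" using lo by linarith
  then show "2 / (pi * R\<^sup>2) * (r * arccos (cos_angle R d r)) = prof R d r"
    if "r \<in> {lo..d + R}" for r
    using prof_eq_arc_profile[of d R r] lo that by auto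
qed

lemma prof_nonzero_imp_mem:
  fixes R d r :: real
  assumes "0 \<le> d" "0 \<le> r" "prof R d r \<noteq> 0"
  shows "r \<in> {max 0 (d - R)..d + R}"
  using assms by (auto simp: prof_def split: if_splits)

lemma prof_nonzero:
  fixes R d r :: real
  assumes "0 < R" "0 \<le> d" "max 0 (d - R) < r" "r < d + R"
  shows "prof R d r \<noteq> 0"
proof (cases "r \<le> R - d")
  case True
  then show ?thesis using assms by (simp add: prof_def)
next
  case False
  then have lens: "\<bar>d - R\<bar> < r" "r < d + R" using assms by auto
  have "arccos (cos_angle R d r) \<noteq> 0"
    using cos_angle_strict_bounds[OF lens] arccos_eq_0_iff[of "cos_angle R d r"] by auto
  then show ?thesis
    using False assms lens_pos[OF lens] by (simp add: prof_def cos_angle_def)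
qed

lemma prof_support_eq:
  fixes R d :: real
  assumes "0 < R" "0 \<le> d"
  shows "prof_support R d = {max 0 (d - R)..d + R}"
proof
  show "prof_support R d \<subseteq> {max 0 (d - R)..d + R}"
    unfolding prof_support_def
    by (rule closure_minimal) (use assms prof_nonzero_imp_mem in auto)
  have "{max 0 (d - R)..d + R} = closure {max 0 (d - R)<..<d + R}"
    using assms by simp
  also have "\<dots> \<subseteq> prof_support R d"
    unfolding prof_support_def by (rule closure_mono) (use assms prof_nonzero in auto)
  finally show "{max 0 (d - R)..d + R} \<subseteq> prof_support R d" .
qed

theorem propositionB1:
  fixes R :: real
  assumes "R > 0"
  shows "(\<forall>d::real. d \<ge> 0 \<longrightarrow> concave_on (prof_support R d \<inter> {R..}) (prof R d))
       \<and> (\<forall>d::real. d \<ge> R \<longrightarrow>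
            prof_support R d = {d - R..d + R} \<and> concave_on {d - R..d + R} (prof R d))"
proof (intro conjI allI impI)
  fix d :: real assume "d \<ge> 0"
  have support: "prof_support R d \<inter> {R..} = {max R (d - R)..d + R}"
    unfolding prof_support_eq[OF assms \<open>d \<ge> 0\<close>] using assms by auto
  show "concave_on (prof_support R d \<inter> {R..}) (prof R d)"
  proof (cases "d = 0")
    case True
    then show ?thesis unfolding support by (intro concave_on_Icc_degenerate) simp
  next
    case False
    have "R\<^sup>2 \<le> (max R (d - R))\<^sup>2" using assms by (intro power_mono) auto
    then have "R\<^sup>2 - d\<^sup>2 \<le> (max R (d - R))\<^sup>2" by (smt (verit) zero_le_power2)
    with assms \<open>d \<ge> 0\<close> False show ?thesis
      unfolding support by (intro concave_on_prof) auto
  qed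
next
  fix d :: real assume "d \<ge> R"
  then show "prof_support R d = {d - R..d + R}"
    using prof_support_eq[of R d] assms by simp
  have "R\<^sup>2 - d\<^sup>2 \<le> (d - R)\<^sup>2"
    using \<open>d \<ge> R\<close> assms by (smt (verit) power_mono zero_le_power2)
  with \<open>d \<ge> R\<close> assms show "concave_on {d - R..d + R} (prof R d)"
    by (intro concave_on_prof) auto
qed

end
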